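(* Let $\Omega\subset\mathbb{R}^d$ be an unbounded closed convex set and let $W,V\in C^1(\mathbb{R}^d)$ with $W$ $\lambda_W$-geodesically convex on $\Omega-\Omega$, $V$ $\lambda_V$-geodesically convex on $\Omega$, and $|\nabla W(x)|\le C_0(1+|x|)$, $|\nabla V(x)|\le C_0(1+|x|)$ for all $x$. Then there is a constant $C=C(W,V)>0$ (independent of $n$ and of the number of particles) such that the following holds: if $n\in\mathbb{N}$, $x^n_1,\dots,x^n_{k}\in\Omega\cap B(n)$, $m^n_i\ge0$ with $\sum_im^n_i=1$, $(x^n_i(t))_i$ is a locally absolutely continuous solution of $\dot x^n_i(t)=P_{x^n_i(t)}\big(-\sum_jm^n_j\nabla W(x^n_i(t)-x^n_j(t))-\nabla V(x^n_i(t))\big)$, $x^n_i(0)=x^n_i$, and $\mu^n(t)=\sum_im^n_i\delta_{x^n_i(t)}$, then $\mathrm{supp}(\mu^n(t))\subset\Omega\cap B(r(t))$ for all $t\ge0$ with $r(t)\le(n+1)\exp(Ct)$.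
   Context: $B(r)$ is the ball of radius $r$ centered at the origin. $T(\Omega,x)$ is the tangent cone of the convex set $\Omega$ at $x$ (closure of $\{s(y-x):s\ge0,y\in\Omega\}$) and $P_x(w)$ its nearest point to $w$. $\lambda$-geodesic convexity on convex $K$: $f(y)\ge f(x)+\langle\nabla f(x),y-x\rangle+\frac\lambda2|y-x|^2$ on $K$. *)

theory Defs
  imports "HOL-Analysis.Analysis"
begin

definition tangent_cone :: "'a::euclidean_space set \<Rightarrow> 'a \<Rightarrow> 'a set" where
  "tangent_cone \<Omega> x = closure {s *\<^sub>R (y - x) | s y. s \<ge> 0 \<and> y \<in> \<Omega>}"

definition tangent_proj :: "'a::euclidean_space set \<Rightarrow> 'a \<Rightarrow> 'a \<Rightarrow> 'a" where
  "tangent_proj \<Omega> x w = closest_point (tangent_cone \<Omega> x) w"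

definition geod_convex_on :: "real \<Rightarrow> 'a::real_inner set \<Rightarrow> ('a \<Rightarrow> real) \<Rightarrow> ('a \<Rightarrow> 'a) \<Rightarrow> bool" where
  "geod_convex_on lam K f g \<longleftrightarrow>
     (\<forall>x\<in>K. \<forall>y\<in>K. f y \<ge> f x + g x \<bullet> (y - x) + lam / 2 * (norm (y - x))\<^sup>2)"

definition set_diff_minus :: "'a::ab_group_add set \<Rightarrow> 'a set \<Rightarrow> 'a set" where
  "set_diff_minus A B = {a - b | a b. a \<in> A \<and> b \<in> B}"

definition abs_continuous_on :: "real set \<Rightarrow> (real \<Rightarrow> 'a::real_normed_vector) \<Rightarrow> bool" where
  "abs_continuous_on I f \<longleftrightarrow>
    (\<forall>\<epsilon>>0. \<exists>\<delta>>0. \<forall>D. finite D \<and> (\<forall>(a,b)\<in>D. a \<le> b \<and> {a..b} \<subseteq> I)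
        \<and> pairwise (\<lambda>(a,b) (c,d). {a<..<b} \<inter> {c<..<d} = {}) D
        \<and> (\<Sum>(a,b)\<in>D. b - a) < \<delta>
        \<longrightarrow> (\<Sum>(a,b)\<in>D. norm (f b - f a)) < \<epsilon>)"

definition loc_abs_continuous_nonneg :: "(real \<Rightarrow> 'a::real_normed_vector) \<Rightarrow> bool" where
  "loc_abs_continuous_nonneg f \<longleftrightarrow> (\<forall>T\<ge>0. abs_continuous_on {0..T} f)"

end

theory Submission
  imports Defs
begin

text \<open>Every velocity is a metric projection onto a closed cone containing 0, so it is at most
twice as long as the unprojected drift. While all particles stay in the ball of radius H, the
linear growth of the gradients and the unit total mass bound that drift by 3K(1 + H). Hence an
absolutely continuous trajectory below the barrier (n + 1) exp(6Kt) - 1 moves with speed at most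
6K(n + 1) exp(6Ks), which keeps it strictly below the barrier: no particle can be the first one
to reach it.\<close>

hide_const (open) Polynomial.content

lemma tagged_division_of_real_interval_tagD:
  fixes a b :: real
  assumes "p tagged_division_of {a..b}" and "(x, K) \<in> p"
  obtains u v where "u \<le> v" and "K = {u..v}" and "x \<in> K" and "K \<subseteq> {a..b}"
proof -
  obtain u v where K: "K = cbox u v" using tagged_division_ofD(4)[OF assms] by blast
  have "x \<in> K" "K \<subseteq> {a..b}" using tagged_division_ofD(2,3)[OF assms] by auto
  moreover from K \<open>x \<in> K\<close> have "u \<le> v" by (auto simp: cbox_interval)
  ultimately show ?thesis using K that by (simp add: cbox_interval)
qed

lemma has_vector_derivative_growth_gauge:
  fixes f :: "real \<Rightarrow> 'a::real_normed_vector"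
  assumes der: "\<And>t. t \<in> T \<Longrightarrow> \<exists>f'. (f has_vector_derivative f') (at t within S) \<and> norm f' \<le> g t"
    and "e > 0"
  obtains r where "\<And>t. r t > 0"
    and "\<And>t s. t \<in> T \<Longrightarrow> s \<in> S \<Longrightarrow> \<bar>s - t\<bar> < r t \<Longrightarrow> norm (f s - f t) \<le> (g t + e) * \<bar>s - t\<bar>"
proof -
  have "\<exists>r>0. t \<in> T \<longrightarrow> (\<forall>s\<in>S. \<bar>s - t\<bar> < r \<longrightarrow> norm (f s - f t) \<le> (g t + e) * \<bar>s - t\<bar>)" for t
  proof (cases "t \<in> T")
    case True
    then obtain f' where f': "(f has_vector_derivative f') (at t within S)" "norm f' \<le> g t"
      using der by blast
    then obtain r where "r > 0" and r: "\<And>s. s \<in> S \<Longrightarrow> norm (s - t) < r \<Longrightarrow>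
        norm (f s - f t - (s - t) *\<^sub>R f') \<le> e * norm (s - t)"
      using \<open>e > 0\<close> unfolding has_vector_derivative_def has_derivative_within_alt by blast
    have "norm (f s - f t) \<le> (g t + e) * \<bar>s - t\<bar>" if "s \<in> S" "\<bar>s - t\<bar> < r" for s
    proof -
      have "norm (f s - f t) \<le> norm (f s - f t - (s - t) *\<^sub>R f') + norm ((s - t) *\<^sub>R f')"
        using norm_triangle_ineq[of "f s - f t - (s - t) *\<^sub>R f'" "(s - t) *\<^sub>R f'"] by simp
      also have "\<dots> \<le> e * \<bar>s - t\<bar> + \<bar>s - t\<bar> * g t"
        using r[of s] that f'(2) by (auto intro!: add_mono mult_left_mono)
      finally show ?thesis by (simp add: algebra_simps)
    qed
    with \<open>r > 0\<close> show ?thesis by blast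
  qed (auto intro: exI[of _ 1])
  then show ?thesis using that by metis
qed

lemma abs_continuous_on_imp_continuous_on:
  fixes f :: "real \<Rightarrow> 'a::real_normed_vector"
  assumes "abs_continuous_on {a..b} f"
  shows "continuous_on {a..b} f"
  unfolding continuous_on_iff
proof (intro ballI allI impI)
  fix t e :: real assume t: "t \<in> {a..b}" and "e > 0"
  then obtain \<delta> where "\<delta> > 0" and \<delta>: "\<And>D. finite D \<and> (\<forall>(u,v)\<in>D. u \<le> v \<and> {u..v} \<subseteq> {a..b})
        \<and> pairwise (\<lambda>(a,b) (c,d). {a<..<b} \<inter> {c<..<d} = {}) D
        \<and> (\<Sum>(u,v)\<in>D. v - u) < \<delta> \<Longrightarrow> (\<Sum>(u,v)\<in>D. norm (f v - f u)) < e"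
    using assms unfolding abs_continuous_on_def by meson
  have "dist (f s) (f t) < e" if s: "s \<in> {a..b}" "dist s t < \<delta>" for s
  proof -
    have "max s t - min s t < \<delta>" using s(2) by (cases "s \<le> t") (auto simp: dist_real_def)
    then have "norm (f (max s t) - f (min s t)) < e"
      using \<delta>[of "{(min s t, max s t)}"] s(1) t by auto
    then show ?thesis by (cases "s \<le> t") (auto simp: dist_norm norm_minus_commute)
  qed
  with \<open>\<delta> > 0\<close> show "\<exists>d>0. \<forall>s\<in>{a..b}. dist s t < d \<longrightarrow> dist (f s) (f t) < e" by blast
qed

lemma tagged_division_of_real_nondegenerate_intervals:
  fixes a b :: real
  assumes p: "p tagged_division_of {a..b}" and "Q \<subseteq> p" and nondeg: "\<And>x K. (x,K) \<in> Q \<Longrightarrow> Inf K < Sup K"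
  defines "ends \<equiv> \<lambda>(x::real, K::real set). (Inf K, Sup K)"
  shows "inj_on ends Q"
    and "\<forall>(u,v)\<in>ends ` Q. u \<le> v \<and> {u..v} \<subseteq> {a..b}"
    and "pairwise (\<lambda>(a,b) (c,d). {a<..<b} \<inter> {c<..<d} = {}) (ends ` Q)"
proof -
  have Q: "Inf K < Sup K \<and> {Inf K..Sup K} = K \<and> K \<subseteq> {a..b}" if "(x,K) \<in> Q" for x K
  proof -
    from that have "(x,K) \<in> p" "Inf K < Sup K" using \<open>Q \<subseteq> p\<close> nondeg by auto
    then show ?thesis by (elim tagged_division_of_real_interval_tagD[OF p]) auto
  qed
  have disjoint: "{Inf K<..<Sup K} \<inter> {Inf L<..<Sup L} = {}"
    if "(x,K) \<in> Q" "(y,L) \<in> Q" "(x,K) \<noteq> (y,L)" for x y K L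
  proof -
    have "interior K \<inter> interior L = {}"
      using that \<open>Q \<subseteq> p\<close> by (intro tagged_division_ofD(5)[OF p]) auto
    moreover have "interior K = {Inf K<..<Sup K}" "interior L = {Inf L<..<Sup L}"
      using Q[OF that(1)] Q[OF that(2)]
        interior_atLeastAtMost_real[of "Inf K" "Sup K"] interior_atLeastAtMost_real[of "Inf L" "Sup L"]
      by simp_all
    ultimately show ?thesis by simp
  qed
  show "inj_on ends Q"
  proof (rule inj_onI, clarify)
    fix x y K L assume xK: "(x,K) \<in> Q" and yL: "(y,L) \<in> Q" and "ends (x,K) = ends (y,L)"
    then have "{Inf K<..<Sup K} \<inter> {Inf L<..<Sup L} \<noteq> {}" using Q[OF xK] by (simp add: ends_def)
    then show "x = y \<and> K = L" using disjoint[OF xK yL] by auto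
  qed
  show "\<forall>(u,v)\<in>ends ` Q. u \<le> v \<and> {u..v} \<subseteq> {a..b}"
  proof
    fix z assume "z \<in> ends ` Q"
    then obtain x K where "(x,K) \<in> Q" "z = (Inf K, Sup K)" by (auto simp: ends_def)
    moreover from Q[OF \<open>(x,K) \<in> Q\<close>] have "Inf K < Sup K" "{Inf K..Sup K} \<subseteq> {a..b}" by auto
    ultimately show "case z of (u,v) \<Rightarrow> u \<le> v \<and> {u..v} \<subseteq> {a..b}" by simp
  qed
  show "pairwise (\<lambda>(a,b) (c,d). {a<..<b} \<inter> {c<..<d} = {}) (ends ` Q)"
  proof (rule pairwise_imageI)
    fix y z assume "y \<in> Q" "z \<in> Q" "y \<noteq> z"
    then show "(\<lambda>(a,b) (c,d). {a<..<b} \<inter> {c<..<d} = {}) (ends y) (ends z)"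
      using disjoint[of "fst y" "snd y" "fst z" "snd z"] by (simp add: ends_def case_prod_unfold)
  qed
qed

lemma abs_continuous_on_tagged_division_subset_small:
  fixes f :: "real \<Rightarrow> 'a::real_normed_vector"
  assumes "abs_continuous_on {a..b} f" and "e > 0"
  obtains \<delta> where "\<delta> > 0"
    and "\<And>p Q. p tagged_division_of {a..b} \<Longrightarrow> Q \<subseteq> p \<Longrightarrow> (\<Sum>(x,K)\<in>Q. content K) < \<delta> \<Longrightarrow>
           (\<Sum>(x,K)\<in>Q. norm (f (Sup K) - f (Inf K))) < e"
proof -
  obtain \<delta> where "\<delta> > 0" and \<delta>: "\<And>D. finite D \<and> (\<forall>(u,v)\<in>D. u \<le> v \<and> {u..v} \<subseteq> {a..b})
        \<and> pairwise (\<lambda>(a,b) (c,d). {a<..<b} \<inter> {c<..<d} = {}) D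
        \<and> (\<Sum>(u,v)\<in>D. v - u) < \<delta> \<Longrightarrow> (\<Sum>(u,v)\<in>D. norm (f v - f u)) < e"
    using assms unfolding abs_continuous_on_def by meson
  have "(\<Sum>(x,K)\<in>Q. norm (f (Sup K) - f (Inf K))) < e"
    if p: "p tagged_division_of {a..b}" and "Q \<subseteq> p" and small: "(\<Sum>(x,K)\<in>Q. content K) < \<delta>" for p Q
  proof -
    \<comment> \<open>Degenerate intervals contribute nothing but would spoil injectivity of the endpoint map.\<close>
    define Q' where "Q' = {(x,K)\<in>Q. Inf K < Sup K}"
    define ends where "ends = (\<lambda>(x::real, K::real set). (Inf K, Sup K))"
    have "finite Q" using p \<open>Q \<subseteq> p\<close> finite_subset by blast
    have "Q' \<subseteq> Q" by (auto simp: Q'_def)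
    then have "finite Q'" "Q' \<subseteq> p" using \<open>finite Q\<close> \<open>Q \<subseteq> p\<close> finite_subset by blast+
    note intervals = tagged_division_of_real_nondegenerate_intervals[OF p \<open>Q' \<subseteq> p\<close>, folded ends_def]
    have inj: "inj_on ends Q'" by (rule intervals) (auto simp: Q'_def)
    have "(\<Sum>(u,v)\<in>ends ` Q'. norm (f v - f u)) < e"
    proof (rule \<delta>, intro conjI)
      show "finite (ends ` Q')" using \<open>finite Q'\<close> by simp
      show "\<forall>(u,v)\<in>ends ` Q'. u \<le> v \<and> {u..v} \<subseteq> {a..b}"
        and "pairwise (\<lambda>(a,b) (c,d). {a<..<b} \<inter> {c<..<d} = {}) (ends ` Q')"
        by (rule intervals; auto simp: Q'_def)+
      have "(\<Sum>(u,v)\<in>ends ` Q'. v - u) = (\<Sum>(x,K)\<in>Q'. Sup K - Inf K)"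
        using sum.reindex[OF inj, of "\<lambda>(u,v). v - u"] by (simp add: ends_def case_prod_unfold)
      also have "\<dots> = (\<Sum>(x,K)\<in>Q'. content K)"
      proof (rule sum.cong[OF refl], clarify)
        fix x K assume "(x,K) \<in> Q'"
        then have "(x,K) \<in> p" using \<open>Q' \<subseteq> p\<close> by auto
        then obtain u v where "u \<le> v" "K = {u..v}"
          by (rule tagged_division_of_real_interval_tagD[OF p])
        then show "Sup K - Inf K = content K" by simp
      qed
      also have "\<dots> \<le> (\<Sum>(x,K)\<in>Q. content K)"
        using \<open>finite Q\<close> \<open>Q' \<subseteq> Q\<close> by (intro sum_mono2) auto
      finally show "(\<Sum>(u,v)\<in>ends ` Q'. v - u) < \<delta>" using small by linarith
    qed
    also have "(\<Sum>(u,v)\<in>ends ` Q'. norm (f v - f u)) = (\<Sum>(x,K)\<in>Q. norm (f (Sup K) - f (Inf K)))"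
    proof -
      have "Inf K = Sup K" if "(x,K) \<in> Q - Q'" for x K
      proof -
        have "(x,K) \<in> p" using that \<open>Q \<subseteq> p\<close> by auto
        then obtain u v where "u \<le> v" "K = {u..v}"
          by (rule tagged_division_of_real_interval_tagD[OF p])
        moreover have "\<not> Inf K < Sup K" using that by (simp add: Q'_def)
        ultimately show ?thesis by simp
      qed
      then have "(\<Sum>(x,K)\<in>Q'. norm (f (Sup K) - f (Inf K))) = (\<Sum>(x,K)\<in>Q. norm (f (Sup K) - f (Inf K)))"
        using \<open>finite Q\<close> \<open>Q' \<subseteq> Q\<close> by (intro sum.mono_neutral_left) (auto simp del: Inf_atLeastAtMost)
      then show ?thesis
        using sum.reindex[OF inj, of "\<lambda>(u,v). norm (f v - f u)"] by (simp add: ends_def case_prod_unfold)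
    qed
    finally show ?thesis .
  qed
  with \<open>\<delta> > 0\<close> that show ?thesis by blast
qed

lemma tagged_division_sum_le_local_growth:
  fixes f :: "real \<Rightarrow> 'a::real_normed_vector" and a b :: real
  assumes p: "p tagged_division_of {a..b}" and fine: "(\<lambda>t. ball t (r t)) fine p" and "Q \<subseteq> p"
    and growth: "\<And>x K s. (x,K) \<in> Q \<Longrightarrow> s \<in> {a..b} \<Longrightarrow> \<bar>s - x\<bar> < r x \<Longrightarrow>
        norm (f s - f x) \<le> G x * \<bar>s - x\<bar>"
  shows "(\<Sum>(x,K)\<in>Q. norm (f (Sup K) - f (Inf K))) \<le> (\<Sum>(x,K)\<in>Q. content K * G x)"
proof (rule sum_mono, clarify)
  fix x K assume "(x,K) \<in> Q"
  then have "(x,K) \<in> p" using \<open>Q \<subseteq> p\<close> by auto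
  then obtain u v where uv: "u \<le> v" "K = {u..v}" "x \<in> K" "K \<subseteq> {a..b}"
    by (rule tagged_division_of_real_interval_tagD[OF p])
  have "K \<subseteq> ball x (r x)" using fine \<open>(x,K) \<in> p\<close> by (auto simp: fine_def)
  moreover have "u \<in> K" "v \<in> K" using uv by auto
  ultimately have "\<bar>u - x\<bar> < r x" "\<bar>v - x\<bar> < r x"
    by (auto simp: dist_real_def abs_minus_commute)
  then have "norm (f v - f x) + norm (f x - f u) \<le> G x * \<bar>v - x\<bar> + G x * \<bar>u - x\<bar>"
    using growth[OF \<open>(x,K) \<in> Q\<close>, of v] growth[OF \<open>(x,K) \<in> Q\<close>, of u] uv
    by (auto simp: norm_minus_commute intro!: add_mono)
  moreover have "norm (f v - f u) \<le> norm (f v - f x) + norm (f x - f u)"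
    using norm_triangle_ineq[of "f v - f x" "f x - f u"] by simp
  ultimately show "norm (f (Sup K) - f (Inf K)) \<le> content K * G x" using uv by (simp add: algebra_simps)
qed

lemma negligible_tagged_division_content_small:
  fixes a b :: real
  assumes "negligible E" and "\<delta> > 0"
  obtains \<gamma> where "gauge \<gamma>"
    and "\<And>p. p tagged_division_of {a..b} \<Longrightarrow> \<gamma> fine p \<Longrightarrow> (\<Sum>(x,K)\<in>{(x,K)\<in>p. x \<in> E}. content K) < \<delta>"
proof -
  have "(indicator E has_integral (0::real)) (cbox a b)"
    using \<open>negligible E\<close> negligible_def by blast
  then obtain \<gamma> where "gauge \<gamma>" and \<gamma>: "\<And>p. p tagged_division_of cbox a b \<Longrightarrow> \<gamma> fine p \<Longrightarrow>
      norm ((\<Sum>(x,K)\<in>p. content K *\<^sub>R (indicator E x :: real)) - 0) < \<delta>"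
    using \<open>\<delta> > 0\<close> unfolding has_integral by meson
  have "(\<Sum>(x,K)\<in>{(x,K)\<in>p. x \<in> E}. content K) < \<delta>" if p: "p tagged_division_of {a..b}" and "\<gamma> fine p" for p
  proof -
    have "finite p" using p by blast
    then have "(\<Sum>(x,K)\<in>{(x,K)\<in>p. x \<in> E}. content K) = (\<Sum>(x,K)\<in>p. content K *\<^sub>R (indicator E x :: real))"
      by (intro sum.mono_neutral_cong_left) (auto simp: indicator_def)
    also have "\<dots> < \<delta>" using \<gamma>[of p] p \<open>\<gamma> fine p\<close> by (auto simp: cbox_interval)
    finally show ?thesis .
  qed
  with \<open>gauge \<gamma>\<close> that show ?thesis by blast
qed

lemma abs_continuous_on_norm_diff_le_integral_eps:
  fixes f :: "real \<Rightarrow> 'a::real_normed_vector"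
  assumes "a \<le> b" and ac: "abs_continuous_on {a..b} f"
    and N: "negligible N" and g: "continuous_on {a..b} g" and g_nonneg: "\<And>t. t \<in> {a..b} \<Longrightarrow> g t \<ge> 0"
    and der: "\<And>t. t \<in> {a<..<b} - N \<Longrightarrow>
        \<exists>f'. (f has_vector_derivative f') (at t within {a..b}) \<and> norm f' \<le> g t"
    and "e > 0"
  shows "norm (f b - f a) \<le> integral {a..b} g + e * (b - a + 2)"
proof -
  \<comment> \<open>Tags in E are controlled by absolute continuity, as the intervals carrying them have small
    total length; all other tags are controlled by the derivative bound.\<close>
  define E where "E = N \<union> {a,b}"
  have "negligible E" unfolding E_def using N by (simp add: negligible_Un)
  obtain \<delta> where "\<delta> > 0" and \<delta>: "\<And>p Q. p tagged_division_of {a..b} \<Longrightarrow> Q \<subseteq> p \<Longrightarrow>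
      (\<Sum>(x,K)\<in>Q. content K) < \<delta> \<Longrightarrow> (\<Sum>(x,K)\<in>Q. norm (f (Sup K) - f (Inf K))) < e"
    using abs_continuous_on_tagged_division_subset_small[OF ac \<open>e > 0\<close>] by blast
  obtain \<gamma>E where "gauge \<gamma>E" and \<gamma>E: "\<And>p. p tagged_division_of {a..b} \<Longrightarrow> \<gamma>E fine p \<Longrightarrow>
      (\<Sum>(x,K)\<in>{(x,K)\<in>p. x \<in> E}. content K) < \<delta>"
    using negligible_tagged_division_content_small[OF \<open>negligible E\<close> \<open>\<delta> > 0\<close>] by blast
  have "(g has_integral integral {a..b} g) (cbox a b)"
    using integrable_continuous_real[OF g] by (simp add: cbox_interval has_integral_integral)
  then obtain \<gamma>g where "gauge \<gamma>g" and \<gamma>g: "\<And>p. p tagged_division_of cbox a b \<Longrightarrow> \<gamma>g fine p \<Longrightarrow>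
      norm ((\<Sum>(x,K)\<in>p. content K *\<^sub>R g x) - integral {a..b} g) < e"
    using \<open>e > 0\<close> unfolding has_integral by meson
  obtain r where "\<And>t. r t > 0" and r: "\<And>t s. t \<in> {a<..<b} - E \<Longrightarrow> s \<in> {a..b} \<Longrightarrow>
      \<bar>s - t\<bar> < r t \<Longrightarrow> norm (f s - f t) \<le> (g t + e) * \<bar>s - t\<bar>"
    using has_vector_derivative_growth_gauge[OF der \<open>e > 0\<close>, of "{a<..<b} - E"] by (auto simp: E_def)
  have "gauge (\<lambda>t. ball t (r t))" using \<open>\<And>t. r t > 0\<close> by (simp add: gauge_def)
  then obtain p where p: "p tagged_division_of {a..b}"
    and "(\<lambda>t. \<gamma>g t \<inter> \<gamma>E t \<inter> ball t (r t)) fine p"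
    using fine_division_exists[OF gauge_Int[OF gauge_Int[OF \<open>gauge \<gamma>g\<close> \<open>gauge \<gamma>E\<close>]], of _ a b]
    by (auto simp: cbox_interval)
  then have fine: "\<gamma>g fine p" "\<gamma>E fine p" "(\<lambda>t. ball t (r t)) fine p"
    by (auto simp: fine_Int)
  define F where "F = (\<lambda>(x::real, K::real set). norm (f (Sup K) - f (Inf K)))"
  define B where "B = {(x,K)\<in>p. x \<in> E}"
  have "finite p" using p by blast
  have "B \<subseteq> p" by (auto simp: B_def)
  have "norm (f b - f a) \<le> (\<Sum>y\<in>p. F y)"
    unfolding additive_tagged_division_1[OF \<open>a \<le> b\<close> p, symmetric] F_def case_prod_unfold
    by (rule norm_sum)
  also have "\<dots> = (\<Sum>y\<in>p - B. F y) + (\<Sum>y\<in>B. F y)"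
    using \<open>finite p\<close> \<open>B \<subseteq> p\<close> by (simp add: sum.subset_diff)
  also have "(\<Sum>y\<in>p - B. F y) \<le> (\<Sum>(x,K)\<in>p - B. content K * (g x + e))"
    unfolding F_def
  proof (rule tagged_division_sum_le_local_growth[OF p fine(3)])
    fix x K s assume "(x,K) \<in> p - B" "s \<in> {a..b}" "\<bar>s - x\<bar> < r x"
    moreover from \<open>(x,K) \<in> p - B\<close> have "x \<in> {a<..<b} - E"
      using tagged_division_ofD(2,3)[OF p, of x K] by (auto simp: B_def E_def)
    ultimately show "norm (f s - f x) \<le> (g x + e) * \<bar>s - x\<bar>" using r by blast
  qed auto
  also have "\<dots> \<le> (\<Sum>(x,K)\<in>p. content K * (g x + e))"
  proof -
    have "0 \<le> content K * (g x + e)" if "(x,K) \<in> p" for x K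
      using tagged_division_ofD(2,3)[OF p that] g_nonneg[of x] \<open>e > 0\<close> by auto
    then show ?thesis using \<open>finite p\<close> by (intro sum_mono2) auto
  qed
  also have "\<dots> = (\<Sum>(x,K)\<in>p. content K *\<^sub>R g x) + e * (b - a)"
  proof -
    have "(\<Sum>(x,K)\<in>p. content K) = b - a"
      using additive_content_tagged_division[of p a b] p \<open>a \<le> b\<close> by (simp add: cbox_interval)
    moreover have "(\<Sum>(x,K)\<in>p. content K * (g x + e))
        = (\<Sum>(x,K)\<in>p. content K *\<^sub>R g x) + e * (\<Sum>(x,K)\<in>p. content K)"
      by (simp add: sum.distrib sum_distrib_left case_prod_unfold algebra_simps)
    ultimately show ?thesis by simp
  qed
  also have "(\<Sum>(x,K)\<in>p. content K *\<^sub>R g x) \<le> integral {a..b} g + e"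
    using \<gamma>g[of p] p fine(1) by (auto simp: cbox_interval)
  also have "(\<Sum>y\<in>B. F y) < e"
    unfolding F_def
    using \<delta>[OF p \<open>B \<subseteq> p\<close>] \<gamma>E[OF p fine(2)] by (simp add: B_def)
  finally show ?thesis by (simp add: algebra_simps)
qed

lemma abs_continuous_on_norm_diff_le_integral:
  fixes f :: "real \<Rightarrow> 'a::real_normed_vector"
  assumes "a \<le> b" and "abs_continuous_on {a..b} f"
    and "continuous_on {a..b} g" and "\<And>t. t \<in> {a..b} \<Longrightarrow> g t \<ge> 0"
    and "AE t in lebesgue. t \<in> {a<..<b} \<longrightarrow>
        (\<exists>f'. (f has_vector_derivative f') (at t within {a..b}) \<and> norm f' \<le> g t)"
  shows "norm (f b - f a) \<le> integral {a..b} g"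
proof (rule field_le_epsilon)
  fix e :: real assume "e > 0"
  obtain N where "negligible N" and N: "{t. \<not> (t \<in> {a<..<b} \<longrightarrow>
      (\<exists>f'. (f has_vector_derivative f') (at t within {a..b}) \<and> norm f' \<le> g t))} \<subseteq> N"
    using assms(5) unfolding eventually_ae_filter_negligible by blast
  have "norm (f b - f a) \<le> integral {a..b} g + e / (b - a + 2) * (b - a + 2)"
    using \<open>e > 0\<close> \<open>a \<le> b\<close> N
    by (intro abs_continuous_on_norm_diff_le_integral_eps[OF assms(1,2) \<open>negligible N\<close> assms(3,4)])
      auto
  then show "norm (f b - f a) \<le> integral {a..b} g + e" using \<open>a \<le> b\<close> by simp
qed

lemma abs_continuous_on_exponential_growth:
  fixes f :: "real \<Rightarrow> 'a::real_normed_vector"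
  assumes "T \<ge> 0" and "abs_continuous_on {0..T} f" and "B \<ge> 0" and "c \<ge> 0"
    and "AE t in lebesgue. t \<in> {0<..<T} \<longrightarrow>
        (\<exists>f'. (f has_vector_derivative f') (at t within {0..T}) \<and> norm f' \<le> c * B * exp (c * t))"
  shows "norm (f T - f 0) \<le> B * exp (c * T) - B"
proof -
  have "norm (f T - f 0) \<le> integral {0..T} (\<lambda>t. c * B * exp (c * t))"
    using assms by (intro abs_continuous_on_norm_diff_le_integral) (auto intro!: continuous_intros)
  also have "\<dots> = B * exp (c * T) - B"
  proof (rule integral_unique)
    have "((\<lambda>t. c * B * exp (c * t)) has_integral B * exp (c * T) - B * exp (c * 0)) {0..T}"
      by (intro fundamental_theorem_of_calculus[OF \<open>T \<ge> 0\<close>])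
        (auto intro!: derivative_eq_intros simp: has_real_derivative_iff_has_vector_derivative[symmetric])
    then show "((\<lambda>t. c * B * exp (c * t)) has_integral B * exp (c * T) - B) {0..T}" by simp
  qed
  finally show ?thesis .
qed

lemma norm_closest_point_le:
  fixes S :: "'a::euclidean_space set"
  assumes "closed S" and "0 \<in> S"
  shows "norm (closest_point S w) \<le> 2 * norm w"
proof -
  have "norm (closest_point S w - w) \<le> norm w"
    using closest_point_le[OF assms, of w] by (simp add: dist_norm norm_minus_commute)
  then show ?thesis
    using norm_triangle_ineq[of "closest_point S w - w" w] by simp
qed

lemma closed_tangent_cone: "closed (tangent_cone \<Omega> x)"
  unfolding tangent_cone_def by simp

lemma zero_in_tangent_cone:
  assumes "x \<in> \<Omega>"
  shows "0 \<in> tangent_cone \<Omega> x"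
proof -
  have "0 = 0 *\<^sub>R (x - x)" by simp
  with assms show ?thesis unfolding tangent_cone_def by (blast intro: closure_subset[THEN subsetD])
qed

lemma norm_tangent_proj_le: "x \<in> \<Omega> \<Longrightarrow> norm (tangent_proj \<Omega> x w) \<le> 2 * norm w"
  unfolding tangent_proj_def by (intro norm_closest_point_le closed_tangent_cone zero_in_tangent_cone)

lemma norm_interaction_drift_le:
  fixes gW gV :: "'a::real_normed_vector \<Rightarrow> 'a" and y :: "nat \<Rightarrow> 'a"
  assumes gW: "\<And>z. norm (gW z) \<le> K * (1 + norm z)" and gV: "\<And>z. norm (gV z) \<le> K * (1 + norm z)"
    and "K \<ge> 0" and m: "\<And>j. j < k \<Longrightarrow> m j \<ge> 0" and m_sum: "(\<Sum>j<k. m j) = 1"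
    and y: "\<And>j. j < k \<Longrightarrow> norm (y j) \<le> H" and "i < k"
  shows "norm (- (\<Sum>j<k. m j *\<^sub>R gW (y i - y j)) - gV (y i)) \<le> 3 * K * (1 + H)"
proof -
  have "norm (gW (y i - y j)) \<le> K * (1 + 2 * H)" if "j < k" for j
  proof -
    have "norm (y i - y j) \<le> 2 * H"
      using norm_triangle_ineq4[of "y i" "y j"] y[OF \<open>i < k\<close>] y[OF that] by simp
    then show ?thesis using gW[of "y i - y j"] \<open>K \<ge> 0\<close> by (smt (verit) mult_left_mono)
  qed
  then have "norm (\<Sum>j<k. m j *\<^sub>R gW (y i - y j)) \<le> (\<Sum>j<k. m j * (K * (1 + 2 * H)))"
    using m by (intro order_trans[OF norm_sum] sum_mono) (simp add: mult_left_mono)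
  also have "\<dots> = K * (1 + 2 * H)" using m_sum by (simp add: sum_distrib_right[symmetric])
  finally have "norm (\<Sum>j<k. m j *\<^sub>R gW (y i - y j)) \<le> K * (1 + 2 * H)" .
  moreover have "norm (gV (y i)) \<le> K * (1 + H)"
    using gV[of "y i"] y[OF \<open>i < k\<close>] \<open>K \<ge> 0\<close> by (smt (verit) mult_left_mono)
  ultimately show ?thesis
    using norm_triangle_ineq4[of "- (\<Sum>j<k. m j *\<^sub>R gW (y i - y j))" "gV (y i)"] \<open>K \<ge> 0\<close>
    by (simp add: algebra_simps)
qed

lemma continuous_barrier_principle:
  fixes u :: "'i \<Rightarrow> real \<Rightarrow> real" and h :: "real \<Rightarrow> real"
  assumes "finite I"
    and u: "\<And>i T. i \<in> I \<Longrightarrow> continuous_on {0..T} (u i)" and h: "continuous_on {0..} h"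
    and start: "\<And>i. i \<in> I \<Longrightarrow> u i 0 < h 0"
    and step: "\<And>i \<tau>. i \<in> I \<Longrightarrow> \<tau> > 0 \<Longrightarrow> (\<And>j s. j \<in> I \<Longrightarrow> 0 \<le> s \<Longrightarrow> s < \<tau> \<Longrightarrow> u j s < h s) \<Longrightarrow>
        u i \<tau> < h \<tau>"
    and "i \<in> I" and "t \<ge> 0"
  shows "u i t < h t"
proof (rule ccontr)
  assume "\<not> u i t < h t"
  define A where "A = {s \<in> {0..t}. \<exists>j\<in>I. h s \<le> u j s}"
  have "closed A"
  proof -
    have "closed {s \<in> {0..t}. h s \<le> u j s}" if "j \<in> I" for j
      using h u[OF that, of t] by (intro continuous_on_closed_Collect_le) (auto elim: continuous_on_subset)
    moreover have "A = (\<Union>j\<in>I. {s \<in> {0..t}. h s \<le> u j s})" by (auto simp: A_def)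
    ultimately show ?thesis using \<open>finite I\<close> by (auto intro: closed_UN)
  qed
  moreover have "t \<in> A" "bdd_below A"
    using \<open>\<not> u i t < h t\<close> \<open>i \<in> I\<close> \<open>t \<ge> 0\<close> by (auto simp: A_def not_less intro: bdd_belowI[of _ 0])
  ultimately have "Inf A \<in> A" using closed_contains_Inf by blast
  then obtain j where j: "j \<in> I" and hit: "h (Inf A) \<le> u j (Inf A)" and "Inf A \<ge> 0"
    by (auto simp: A_def)
  have below: "u j' s < h s" if "j' \<in> I" "0 \<le> s" "s < Inf A" for j' s
  proof (rule ccontr)
    assume "\<not> u j' s < h s"
    then have "s \<in> A" using that \<open>Inf A \<in> A\<close> by (auto simp: A_def not_less)
    then show False using cInf_lower[OF _ \<open>bdd_below A\<close>] \<open>s < Inf A\<close> by fastforce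
  qed
  have "Inf A \<noteq> 0" using start[OF j] hit by auto
  then have "u j (Inf A) < h (Inf A)" using step[OF j _ below] \<open>Inf A \<ge> 0\<close> by simp
  with hit show False by simp
qed

lemma particle_norm_bound:
  fixes \<Omega> :: "'a::euclidean_space set" and gW gV :: "'a \<Rightarrow> 'a" and x :: "nat \<Rightarrow> real \<Rightarrow> 'a"
  assumes gW: "\<And>z. norm (gW z) \<le> K * (1 + norm z)" and gV: "\<And>z. norm (gV z) \<le> K * (1 + norm z)"
    and "K \<ge> 0" and m: "\<And>j. j < k \<Longrightarrow> m j \<ge> 0" and m_sum: "(\<Sum>j<k. m j) = 1"
    and start: "\<And>i. i < k \<Longrightarrow> norm (x i 0) < R"
    and ac: "\<And>i. i < k \<Longrightarrow> loc_abs_continuous_nonneg (x i)"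
    and in_\<Omega>: "\<And>i t. i < k \<Longrightarrow> t \<ge> 0 \<Longrightarrow> x i t \<in> \<Omega>"
    and ode: "\<And>i. i < k \<Longrightarrow> AE t in lebesgue. t > 0 \<longrightarrow>
        (x i has_vector_derivative
           tangent_proj \<Omega> (x i t) (- (\<Sum>j<k. m j *\<^sub>R gW (x i t - x j t)) - gV (x i t)))
        (at t within {0..})"
    and "i < k" and "t \<ge> 0"
  shows "norm (x i t) < (R + 1) * exp (6 * K * t) - 1"
proof (rule continuous_barrier_principle[where u = "\<lambda>i t. norm (x i t)" and I = "{..<k}"])
  show "continuous_on {0..T} (\<lambda>t. norm (x i t))" if "i \<in> {..<k}" for i T
    using ac[of i] that abs_continuous_on_imp_continuous_on
    by (cases "T \<ge> 0") (auto simp: loc_abs_continuous_nonneg_def intro!: continuous_on_norm)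
  show "continuous_on {0..} (\<lambda>t. (R + 1) * exp (6 * K * t) - 1)" by (intro continuous_intros)
  show "norm (x i 0) < (R + 1) * exp (6 * K * 0) - 1" if "i \<in> {..<k}" for i
    using start[of i] that by simp
next
  fix i \<tau> assume "i \<in> {..<k}" "\<tau> > 0" and below: "\<And>j s. j \<in> {..<k} \<Longrightarrow> 0 \<le> s \<Longrightarrow> s < \<tau> \<Longrightarrow>
    norm (x j s) < (R + 1) * exp (6 * K * s) - 1"
  then have "i < k" by simp
  have "AE s in lebesgue. s \<in> {0<..<\<tau>} \<longrightarrow> (\<exists>v. (x i has_vector_derivative v) (at s within {0..\<tau>})
      \<and> norm v \<le> 6 * K * (R + 1) * exp (6 * K * s))"
    using ode[OF \<open>i < k\<close>]
  proof eventually_elim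
    case (elim s)
    show ?case
    proof
      assume s: "s \<in> {0<..<\<tau>}"
      define w where "w = - (\<Sum>j<k. m j *\<^sub>R gW (x i s - x j s)) - gV (x i s)"
      have "norm w \<le> 3 * K * (1 + ((R + 1) * exp (6 * K * s) - 1))"
        unfolding w_def using s below[of _ s] \<open>i < k\<close>
        by (intro norm_interaction_drift_le[OF gW gV \<open>K \<ge> 0\<close> m m_sum]) (auto intro: less_imp_le)
      then have "norm (tangent_proj \<Omega> (x i s) w) \<le> 6 * K * (R + 1) * exp (6 * K * s)"
        using norm_tangent_proj_le[OF in_\<Omega>[OF \<open>i < k\<close>], of s w] s by (simp add: algebra_simps)
      moreover have "(x i has_vector_derivative tangent_proj \<Omega> (x i s) w) (at s within {0..\<tau>})"
        using elim s unfolding w_def by (auto intro: has_vector_derivative_within_subset)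
      ultimately show "\<exists>v. (x i has_vector_derivative v) (at s within {0..\<tau>})
          \<and> norm v \<le> 6 * K * (R + 1) * exp (6 * K * s)" by blast
    qed
  qed
  moreover have "R \<ge> 0" using start[OF \<open>i < k\<close>] norm_ge_zero[of "x i 0"] by linarith
  ultimately have "norm (x i \<tau> - x i 0) \<le> (R + 1) * exp (6 * K * \<tau>) - (R + 1)"
    using ac[OF \<open>i < k\<close>] \<open>\<tau> > 0\<close> \<open>K \<ge> 0\<close> unfolding loc_abs_continuous_nonneg_def
    by (intro abs_continuous_on_exponential_growth) (auto simp: mult.assoc)
  then show "norm (x i \<tau>) < (R + 1) * exp (6 * K * \<tau>) - 1"
    using norm_triangle_ineq2[of "x i \<tau>" "x i 0"] start[OF \<open>i < k\<close>] by linarith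
qed (use assms in auto)

theorem lemma4p3:
  fixes \<Omega> :: "'a::euclidean_space set"
    and W V :: "'a \<Rightarrow> real" and gW gV :: "'a \<Rightarrow> 'a"
    and lamW lamV C0 :: real
  assumes "closed \<Omega>" and "convex \<Omega>" and "\<not> bounded \<Omega>"
    and "\<And>x. (W has_derivative (\<lambda>h. gW x \<bullet> h)) (at x)" and "continuous_on UNIV gW"
    and "\<And>x. (V has_derivative (\<lambda>h. gV x \<bullet> h)) (at x)" and "continuous_on UNIV gV"
    and "geod_convex_on lamW (set_diff_minus \<Omega> \<Omega>) W gW"
    and "geod_convex_on lamV \<Omega> V gV"
    and "\<And>x. norm (gW x) \<le> C0 * (1 + norm x)"
    and "\<And>x. norm (gV x) \<le> C0 * (1 + norm x)"
  shows "\<exists>C>0. \<forall>(n::nat) (k::nat) (x0 :: nat \<Rightarrow> 'a) (m :: nat \<Rightarrow> real) (x :: nat \<Rightarrow> real \<Rightarrow> 'a).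
     (\<forall>i<k. x0 i \<in> \<Omega> \<inter> ball 0 (real n))
     \<and> (\<forall>i<k. m i \<ge> 0) \<and> (\<Sum>i<k. m i) = 1
     \<and> (\<forall>i<k. loc_abs_continuous_nonneg (x i))
     \<and> (\<forall>i<k. \<forall>t\<ge>0. x i t \<in> \<Omega>)
     \<and> (\<forall>i<k. x i 0 = x0 i)
     \<and> (\<forall>i<k. AE t in lebesgue. t > 0 \<longrightarrow>
          (x i has_vector_derivative
             tangent_proj \<Omega> (x i t) (- (\<Sum>j<k. m j *\<^sub>R gW (x i t - x j t)) - gV (x i t)))
          (at t within {0..}))
     \<longrightarrow> (\<forall>t\<ge>0. \<exists>r. r \<le> (real n + 1) * exp (C * t) \<and>
             {x i t | i. i < k \<and> m i > 0} \<subseteq> \<Omega> \<inter> ball 0 r)"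
proof -
  define K where "K = max C0 1"
  have "K \<ge> 1" by (simp add: K_def)
  have gW: "norm (gW z) \<le> K * (1 + norm z)" and gV: "norm (gV z) \<le> K * (1 + norm z)" for z
    using assms(10,11)[of z] mult_right_mono[of C0 K "1 + norm z"] by (auto simp: K_def)
  show ?thesis
  proof (rule exI[of _ "6 * K"], intro conjI allI impI; (elim conjE)?)
    show "6 * K > 0" using \<open>K \<ge> 1\<close> by simp
  next
    fix n k :: nat and x0 :: "nat \<Rightarrow> 'a" and m :: "nat \<Rightarrow> real" and x :: "nat \<Rightarrow> real \<Rightarrow> 'a"
      and t :: real
    assume start: "\<forall>i<k. x0 i \<in> \<Omega> \<inter> ball 0 (real n)" and init: "\<forall>i<k. x i 0 = x0 i"
      and m: "\<forall>i<k. m i \<ge> 0" and m_sum: "(\<Sum>i<k. m i) = 1"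
      and ac: "\<forall>i<k. loc_abs_continuous_nonneg (x i)" and in_\<Omega>: "\<forall>i<k. \<forall>t\<ge>0. x i t \<in> \<Omega>"
      and ode: "\<forall>i<k. AE t in lebesgue. t > 0 \<longrightarrow>
          (x i has_vector_derivative
             tangent_proj \<Omega> (x i t) (- (\<Sum>j<k. m j *\<^sub>R gW (x i t - x j t)) - gV (x i t)))
          (at t within {0..})"
      and "t \<ge> 0"
    have "norm (x i t) < (real n + 1) * exp (6 * K * t) - 1" if "i < k" for i
      by (rule particle_norm_bound[where \<Omega> = \<Omega> and x = x and m = m and k = k, OF gW gV])
        (use start init m m_sum ac in_\<Omega> ode \<open>K \<ge> 1\<close> \<open>t \<ge> 0\<close> that in auto)
    then show "\<exists>r. r \<le> (real n + 1) * exp (6 * K * t) \<and> {x i t |i. i < k \<and> 0 < m i} \<subseteq> \<Omega> \<inter> ball 0 r"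
      using in_\<Omega> \<open>t \<ge> 0\<close> by (intro exI[of _ "(real n + 1) * exp (6 * K * t)"]) fastforce
  qed
qed

end
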